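(* Let $X$ be a nonempty set, let $w$ be a metric modular on $X$, let $x_0\in X$ and let $X_w^*=\{x\in X:\exists\,\lambda>0,\ w_\lambda(x,x_0)<\infty\}$. Let $T\colon X_w^*\to X_w^*$ be a map and let $k\in(0,1)$, $\lambda_0>0$ be such that $w_{k\lambda}(Tx,Ty)\le k\,w_\lambda(x,y)$ for all $0<\lambda\le\lambda_0$ and all $x,y\in X_w^*$. Let $0<\lambda<\lambda_0$ and let $\lambda_1,\lambda_2>0$ with $\lambda_1+\lambda_2=(1-k)\lambda$. Then $$w_\lambda(x,y)\le \frac{w_{\lambda_1}(x,Tx)+w_{\lambda_2}(y,Ty)}{1-k}$$ for every $x,y\in X_w^*$ such that $w_\lambda(x,y)<\infty$.
   Context: A metric modular on a nonempty set $X$ is a function $w\colon(0,\infty)\times X\times X\to[0,\infty]$, written $(\lambda,x,y)\mapsto w_\lambda(x,y)$, such that for all $x,y,z\in X$: (1) $w_\lambda(x,y)=0$ for all $\lambda>0$ if and only if $x=y$; (2) $w_\lambda(x,y)=w_\lambda(y,x)$ for all $\lambda>0$; (3) $w_{\lambda+\mu}(x,y)\le w_\lambda(x,z)+w_\mu(y,z)$ for all $\lambda,\mu>0$. Arithmetic is in $[0,\infty]$. *)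

theory Defs
  imports "HOL-Analysis.Analysis" "HOL-Library.Extended_Nonnegative_Real"
begin

text \<open>A metric modular on a nonempty set X: w lam x y stands for w_lam(x,y) in [0,infinity].
  Only values for lam > 0 and x, y in X are relevant.\<close>
definition metric_modular :: "'a set \<Rightarrow> (real \<Rightarrow> 'a \<Rightarrow> 'a \<Rightarrow> ennreal) \<Rightarrow> bool" where
  "metric_modular X w \<longleftrightarrow>
     (\<forall>x\<in>X. \<forall>y\<in>X. (\<forall>lam>0. w lam x y = 0) \<longleftrightarrow> x = y) \<and>
     (\<forall>x\<in>X. \<forall>y\<in>X. \<forall>lam>0. w lam x y = w lam y x) \<and>
     (\<forall>x\<in>X. \<forall>y\<in>X. \<forall>z\<in>X. \<forall>lam>0. \<forall>mu>0. w (lam + mu) x y \<le> w lam x z + w mu y z)"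

definition modular_set :: "'a set \<Rightarrow> (real \<Rightarrow> 'a \<Rightarrow> 'a \<Rightarrow> ennreal) \<Rightarrow> 'a \<Rightarrow> 'a set" where
  "modular_set X w x0 = {x\<in>X. \<exists>lam>0. w lam x x0 < \<infinity>}"

end

theory Submission
  imports Defs
begin

text \<open>Two applications of the modular triangle inequality route \<open>w\<^sub>\<lambda>(x, y)\<close> through
  \<open>Tx\<close> and \<open>Ty\<close>, splitting \<open>\<lambda> = \<lambda>\<^sub>1 + k\<lambda> + \<lambda>\<^sub>2\<close>. The contraction bounds the middle term
  by \<open>k w\<^sub>\<lambda>(x, y)\<close>, which is absorbed into the left-hand side since \<open>w\<^sub>\<lambda>(x, y) < \<infinity>\<close>.\<close>

lemma metric_modular_triangle_twice:
  assumes "metric_modular X w" "x \<in> X" "y \<in> X" "u \<in> X" "v \<in> X"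
    and "0 < a" "0 < b" "0 < c"
  shows "w (a + b + c) x y \<le> w a x u + w b u v + w c y v"
proof -
  have tri: "\<And>p q r l m. p \<in> X \<Longrightarrow> q \<in> X \<Longrightarrow> r \<in> X \<Longrightarrow> 0 < l \<Longrightarrow> 0 < m \<Longrightarrow>
      w (l + m) p q \<le> w l p r + w m q r"
    using assms(1) unfolding metric_modular_def by blast
  have "w (a + (c + b)) x y \<le> w a x u + w (c + b) y u"
    using assms by (intro tri) auto
  also have "w (c + b) y u \<le> w c y v + w b u v"
    using assms by (intro tri) auto
  finally show ?thesis
    by (simp add: ac_simps add_left_mono)
qed

lemma ennreal_le_divide_of_le_add_mult:
  fixes W S :: ennreal and k :: real
  assumes "0 \<le> k" "k < 1" "W \<noteq> \<infinity>" "W \<le> S + ennreal k * W"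
  shows "W \<le> S / ennreal (1 - k)"
proof -
  have "W * ennreal (1 - k) + ennreal k * W = W * (ennreal (1 - k) + ennreal k)"
    by (simp add: distrib_left mult.commute)
  also have "\<dots> = W"
    using assms(1,2) by (simp flip: ennreal_plus)
  finally have "W * ennreal (1 - k) + ennreal k * W \<le> S + ennreal k * W"
    using assms(4) by simp
  then have "W * ennreal (1 - k) \<le> S"
    using assms(3) by (auto simp: ennreal_mult_eq_top_iff top.not_eq_extremum)
  then show ?thesis
    using assms(2) by (metis divide_right_mono_ennreal mult_divide_eq_ennreal
        ennreal_eq_zero_iff ennreal_neq_top less_le diff_gt_0_iff_gt)
qed

theorem proposition4p5:
  fixes X :: "'a set" and w :: "real \<Rightarrow> 'a \<Rightarrow> 'a \<Rightarrow> ennreal"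
    and x0 :: 'a and T :: "'a \<Rightarrow> 'a" and k lam0 lam lam1 lam2 :: real
  assumes "X \<noteq> {}"
    and "metric_modular X w"
    and "x0 \<in> X"
    and "T ` modular_set X w x0 \<subseteq> modular_set X w x0"
    and "0 < k" and "k < 1" and "0 < lam0"
    and "\<And>l x y. 0 < l \<Longrightarrow> l \<le> lam0 \<Longrightarrow> x \<in> modular_set X w x0 \<Longrightarrow>
            y \<in> modular_set X w x0 \<Longrightarrow> w (k * l) (T x) (T y) \<le> ennreal k * w l x y"
    and "0 < lam" and "lam < lam0"
    and "0 < lam1" and "0 < lam2" and "lam1 + lam2 = (1 - k) * lam"
  shows "\<forall>x\<in>modular_set X w x0. \<forall>y\<in>modular_set X w x0. w lam x y < \<infinity> \<longrightarrow>
           w lam x y \<le> (w lam1 x (T x) + w lam2 y (T y)) / ennreal (1 - k)"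
proof (intro ballI impI)
  fix x y
  assume x: "x \<in> modular_set X w x0" and y: "y \<in> modular_set X w x0"
    and finite: "w lam x y < \<infinity>"
  have "modular_set X w x0 \<subseteq> X"
    unfolding modular_set_def by auto
  moreover have "T x \<in> modular_set X w x0" "T y \<in> modular_set X w x0"
    using x y assms(4) by auto
  ultimately have "w (lam1 + k * lam + lam2) x y
      \<le> w lam1 x (T x) + w (k * lam) (T x) (T y) + w lam2 y (T y)"
    using x y assms(5,9,11,12) by (intro metric_modular_triangle_twice[OF assms(2)]) auto
  also have "w (k * lam) (T x) (T y) \<le> ennreal k * w lam x y"
    using assms(8,9,10) x y by simp
  finally have "w lam x y \<le> (w lam1 x (T x) + w lam2 y (T y)) + ennreal k * w lam x y"
    using assms(13) by (simp add: algebra_simps add_right_mono add_left_mono)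
  then show "w lam x y \<le> (w lam1 x (T x) + w lam2 y (T y)) / ennreal (1 - k)"
    using assms(5,6) finite by (intro ennreal_le_divide_of_le_add_mult) auto
qed

end
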